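(* Let $G$ be a $d$-regular bipartite graph on vertex set $V$, $|V|=n$, whose second largest adjacency eigenvalue is at most $\lambda$, where $0<\lambda<d/2$. Then every nonempty $U\subseteq V$ with $|U|<\frac{\lambda^2n}{d^2}$ satisfies $$|N(U)|>\frac{(d-2\lambda)^2}{4\lambda^2}|U|.$$
   Context: $N(U)$ is the set of vertices not in $U$ having a neighbor in $U$. *)

theory Defs
  imports "HOL-Analysis.Analysis" "HOL-Computational_Algebra.Polynomial"
begin

text \<open>Finite simple graphs on a finite vertex type 'a (vertex set V = UNIV),
  given by a symmetric irreflexive adjacency relation.\<close>

definition simple_graph :: "('a \<Rightarrow> 'a \<Rightarrow> bool) \<Rightarrow> bool" where
  "simple_graph E \<longleftrightarrow> (\<forall>u v. E u v \<longrightarrow> E v u) \<and> (\<forall>v. \<not> E v v)"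

definition regular :: "('a \<Rightarrow> 'a \<Rightarrow> bool) \<Rightarrow> nat \<Rightarrow> bool" where
  "regular E d \<longleftrightarrow> (\<forall>v. card {u. E v u} = d)"

definition bipartite :: "('a \<Rightarrow> 'a \<Rightarrow> bool) \<Rightarrow> bool" where
  "bipartite E \<longleftrightarrow> (\<exists>X. \<forall>u v. E u v \<longrightarrow> (u \<in> X \<longleftrightarrow> v \<notin> X))"

definition nbhd :: "('a \<Rightarrow> 'a \<Rightarrow> bool) \<Rightarrow> 'a set \<Rightarrow> 'a set" where
  "nbhd E U = {v. v \<notin> U \<and> (\<exists>u\<in>U. E u v)}"

definition adj_matrix :: "('a::finite \<Rightarrow> 'a \<Rightarrow> bool) \<Rightarrow> real^'a^'a" where
  "adj_matrix E = (\<chi> i j. if E i j then 1 else 0)"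

definition char_poly :: "real^'n^'n \<Rightarrow> real poly" where
  "char_poly A = det (\<chi> i j. (if i = j then [:0, 1:] else 0) - [:A $ i $ j:])"

definition is_eigenvalue :: "real^'n^'n \<Rightarrow> real \<Rightarrow> bool" where
  "is_eigenvalue A \<mu> \<longleftrightarrow> poly (char_poly A) \<mu> = 0"

text \<open>Second largest eigenvalue counted with multiplicity (algebraic multiplicity
  = root order in the characteristic polynomial): the largest eigenvalue \<mu> such
  that at least two eigenvalues (with multiplicity) are \<ge> \<mu>.\<close>
definition second_eigenvalue :: "real^'n^'n \<Rightarrow> real" where
  "second_eigenvalue A = Max {\<mu>. is_eigenvalue A \<mu> \<and>
      (\<Sum>\<nu>\<in>{\<nu>. is_eigenvalue A \<nu> \<and> \<mu> \<le> \<nu>}. order \<nu> (char_poly A)) \<ge> 2}"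

end

theory Submission
  imports Defs
begin

text \<open>
  Let \<open>u\<close> be the indicator vector of \<open>U\<close>, \<open>k = |U|\<close>, and let \<open>s\<close> be the vector that is
  \<open>1\<close> on one side of the bipartition and \<open>-1\<close> on the other; \<open>1\<close> and \<open>s\<close> are eigenvectors of
  the adjacency matrix \<open>A\<close> for \<open>d\<close> and \<open>-d\<close>. On their orthogonal complement \<open>\<parallel>A w\<parallel> \<le> \<lambda> \<parallel>w\<parallel>\<close>:
  a maximiser of the Rayleigh quotient of \<open>A\<^sup>2\<close> on it is an eigenvector of \<open>A\<^sup>2\<close> for some \<open>\<mu>\<close>,
  which yields an eigenvector of \<open>A\<close> for \<open>\<surd>\<mu>\<close> orthogonal to \<open>1\<close> (flipping signs by \<open>s\<close> if
  necessary), and together with the eigenvector \<open>1\<close> for \<open>d > \<lambda>\<close> this forces \<open>\<surd>\<mu> \<le> \<lambda>\<close> by the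
  definition of the second eigenvalue. Decomposing \<open>u\<close> along \<open>1\<close>, \<open>s\<close> and this complement gives
  \<open>\<parallel>A u\<parallel>\<^sup>2 \<le> 2 d\<^sup>2 k\<^sup>2 / n + \<lambda>\<^sup>2 k < 3 \<lambda>\<^sup>2 k\<close>. On the other hand \<open>A u\<close> is supported on
  \<open>U \<union> N(U)\<close> and its entries sum to \<open>d k\<close>, so Cauchy-Schwarz gives
  \<open>d\<^sup>2 k\<^sup>2 \<le> (k + |N(U)|) \<parallel>A u\<parallel>\<^sup>2\<close>. Hence \<open>d\<^sup>2 k < 3 \<lambda>\<^sup>2 (k + |N(U)|)\<close>, which implies the
  claim because \<open>3 (d - 2\<lambda>)\<^sup>2 \<le> 4 (d\<^sup>2 - 3\<lambda>\<^sup>2)\<close> for \<open>d > 2\<lambda>\<close>.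
\<close>

lemma mat_mult_vector: "mat c *v x = c *\<^sub>R (x :: real^'n)"
proof -
  have "(\<Sum>j\<in>UNIV. (if i = j then c else 0) * x $ j) = c * x $ i" for i
    by (simp add: if_distrib[of "\<lambda>a. a * _"] cong: if_cong)
  then show ?thesis by (simp add: vec_eq_iff matrix_vector_mult_def mat_def)
qed

lemma poly_char_poly: "poly (char_poly A) v = det (mat v - A)"
  unfolding char_poly_def det_def mat_def
  by (simp add: poly_sum poly_prod) (auto intro!: sum.cong prod.cong)

lemma det_eq_0_if_kernel:
  fixes M :: "real^'n^'n"
  assumes "M *v x = 0" "x \<noteq> 0"
  shows "det M = 0"
  by (metis assms invertible_det_nz invertible_left_inverse matrix_left_invertible_ker)

lemma mat_minus_mult_eq_0_iff: "(mat v - A) *v x = 0 \<longleftrightarrow> A *v x = v *\<^sub>R x"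
  by (auto simp: matrix_vector_mult_diff_rdistrib mat_mult_vector)

lemma is_eigenvalue_iff: "is_eigenvalue A v \<longleftrightarrow> (\<exists>x. x \<noteq> 0 \<and> A *v x = v *\<^sub>R x)"
proof -
  have "is_eigenvalue A v \<longleftrightarrow> \<not> invertible (mat v - A)"
    by (simp add: is_eigenvalue_def poly_char_poly invertible_det_nz)
  also have "\<dots> \<longleftrightarrow> (\<exists>x. x \<noteq> 0 \<and> (mat v - A) *v x = 0)"
    unfolding invertible_left_inverse matrix_left_invertible_ker by blast
  finally show ?thesis
    by (simp add: mat_minus_mult_eq_0_iff)
qed

lemma char_poly_nonzero: "char_poly A \<noteq> 0"
proof
  assume "char_poly A = 0"
  obtain B where B: "B > 0" "\<And>x. norm (A *v x) \<le> norm x * B"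
    using bounded_linear.pos_bounded[OF matrix_vector_mul_bounded_linear] by blast
  from \<open>char_poly A = 0\<close> have "is_eigenvalue A (B + 1)"
    by (simp add: is_eigenvalue_def)
  then obtain x where "x \<noteq> 0" "A *v x = (B + 1) *\<^sub>R x"
    by (auto simp: is_eigenvalue_iff)
  moreover have "norm ((B + 1) *\<^sub>R x) = (B + 1) * norm x"
    using \<open>B > 0\<close> by simp
  ultimately have "(B + 1) * norm x \<le> B * norm x"
    using B(2)[of x] by (simp add: mult.commute)
  with \<open>x \<noteq> 0\<close> show False by simp
qed

lemma finite_eigenvalues: "finite {v. is_eigenvalue A v}"
  using poly_roots_finite[OF char_poly_nonzero] by (simp add: is_eigenvalue_def)

lemma order_char_poly_pos: "is_eigenvalue A v \<Longrightarrow> order v (char_poly A) > 0"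
  using order_gt_0_iff[OF char_poly_nonzero[of A]] by (simp add: is_eigenvalue_def)

definition with_unit_row :: "'a::zero_neq_one^'n^'n \<Rightarrow> 'n \<Rightarrow> 'a^'n^'n" where
  "with_unit_row M a = (\<chi> i. if i = a then axis a 1 else M $ i)"

text \<open>Jacobi's formula for the derivative of \<open>det (x I - A)\<close>: differentiating row \<open>a\<close>
  of \<open>x I - A\<close> leaves the \<open>a\<close>-th unit row.\<close>
lemma poly_pderiv_char_poly:
  fixes A :: "real^'n^'n"
  shows "poly (pderiv (char_poly A)) v = (\<Sum>a\<in>UNIV. det (with_unit_row (mat v - A) a))"
proof -
  let ?M = "(\<chi> i j. (if i = j then [:0, 1:] else 0) - [:A $ i $ j:]) :: real poly^'n^'n"
  let ?N = "mat v - A"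
  have dM: "poly (pderiv (?M$i$j)) v = (if i = j then 1 else 0)" for i j
    by (simp add: pderiv_diff pderiv_pCons one_pCons)
  have pM: "poly (?M$i$j) v = ?N$i$j" for i j
    by (simp add: mat_def)
  have "pderiv (char_poly A) = (\<Sum>p | p permutes UNIV. of_int (sign p) *
      (\<Sum>a\<in>UNIV. prod (\<lambda>i. ?M$i$p i) (UNIV - {a}) * pderiv (?M$a$p a)))"
    unfolding char_poly_def det_def higher_pderiv_sum[where n = 1, simplified]
    by (intro sum.cong refl) (simp add: pderiv_mult pderiv_prod of_int_poly pderiv_smult)
  then have "poly (pderiv (char_poly A)) v = (\<Sum>p | p permutes UNIV. of_int (sign p) *
      (\<Sum>a\<in>UNIV. prod (\<lambda>i. ?N$i$p i) (UNIV - {a}) * (if a = p a then 1 else 0)))"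
    by (simp add: poly_sum poly_prod dM pM del: vec_lambda_beta)
  also have "\<dots> = (\<Sum>a\<in>UNIV. \<Sum>p | p permutes UNIV. of_int (sign p) *
      (prod (\<lambda>i. ?N$i$p i) (UNIV - {a}) * (if a = p a then 1 else 0)))"
    by (simp add: sum_distrib_left sum.swap[of _ UNIV])
  also have "\<dots> = (\<Sum>a\<in>UNIV. det (with_unit_row ?N a))"
    unfolding det_def
  proof (intro sum.cong refl)
    fix a p
    have "prod (\<lambda>i. with_unit_row ?N a $i$p i) UNIV
       = with_unit_row ?N a $a$p a * prod (\<lambda>i. with_unit_row ?N a $i$p i) (UNIV - {a})"
      by (simp add: prod.remove)
    also have "prod (\<lambda>i. with_unit_row ?N a $i$p i) (UNIV - {a}) = prod (\<lambda>i. ?N$i$p i) (UNIV - {a})"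
      by (intro prod.cong) (auto simp: with_unit_row_def)
    finally show "of_int (sign p) *
      (prod (\<lambda>i. ?N$i$p i) (UNIV - {a}) * (if a = p a then 1 else 0))
      = of_int (sign p) * prod (\<lambda>i. with_unit_row ?N a $i$p i) UNIV"
      by (auto simp: with_unit_row_def axis_def)
  qed
  finally show ?thesis .
qed

lemma kernel_vector_vanishing_at:
  fixes M :: "real^'n^'n"
  assumes "M *v x = 0" "M *v z = 0" "x \<noteq> 0" "\<And>c. z \<noteq> c *\<^sub>R x"
  obtains y where "M *v y = 0" "y \<noteq> 0" "y $ a = 0"
proof (cases "x $ a = 0")
  case True
  with assms that show ?thesis by blast
next
  case False
  define y where "y = z - (z $ a / x $ a) *\<^sub>R x"
  have "y \<noteq> 0" using assms(4) by (simp add: y_def)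
  moreover have "M *v y = 0"
    using assms(1,2) by (simp add: y_def matrix_vector_mult_diff_distrib matrix_vector_mult_scaleR)
  moreover have "y $ a = 0" using False by (simp add: y_def)
  ultimately show ?thesis using that by blast
qed

lemma det_with_unit_row_eq_0:
  fixes M :: "real^'n^'n"
  assumes "M *v x = 0" "M *v z = 0" "x \<noteq> 0" "\<And>c. z \<noteq> c *\<^sub>R x"
  shows "det (with_unit_row M a) = 0"
proof -
  obtain y where y: "M *v y = 0" "y \<noteq> 0" "y $ a = 0"
    using kernel_vector_vanishing_at[OF assms] .
  have "(\<Sum>j\<in>UNIV. axis a 1 $ j * y $ j) = y $ a"
    by (simp add: axis_def if_distrib[of "\<lambda>c. c * _"] cong: if_cong)
  then have "with_unit_row M a *v y = 0"
    using y by (auto simp: vec_eq_iff with_unit_row_def matrix_vector_mult_def)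
  then show ?thesis using det_eq_0_if_kernel \<open>y \<noteq> 0\<close> by blast
qed

lemma order_char_poly_ge_2:
  fixes A :: "real^'n^'n"
  assumes "A *v x = v *\<^sub>R x" "A *v z = v *\<^sub>R z" "x \<noteq> 0" "\<And>c. z \<noteq> c *\<^sub>R x"
  shows "order v (char_poly A) \<ge> 2"
proof -
  let ?p = "char_poly A"
  have root: "poly ?p v = 0"
    using assms(1,3) is_eigenvalue_iff is_eigenvalue_def by blast
  have "(mat v - A) *v x = 0" "(mat v - A) *v z = 0"
    using assms(1,2) by (simp_all add: mat_minus_mult_eq_0_iff)
  then have "poly (pderiv ?p) v = 0"
    using det_with_unit_row_eq_0[OF _ _ assms(3,4)] by (simp add: poly_pderiv_char_poly)
  moreover have "pderiv ?p \<noteq> 0"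
  proof
    assume "pderiv ?p = 0"
    then obtain c where "?p = [:c:]"
      by (metis degree_eq_zeroE pderiv_eq_0_iff)
    with root char_poly_nonzero[of A] show False by simp
  qed
  ultimately have "order v (pderiv ?p) > 0"
    by (simp add: order_gt_0_iff)
  then show ?thesis
    using order_pderiv[OF char_poly_nonzero root] by simp
qed

lemma second_eigenvalue_ge_min:
  fixes A :: "real^'n^'n"
  assumes "A *v x = \<mu> *\<^sub>R x" "A *v z = \<nu> *\<^sub>R z" "x \<noteq> 0" "\<And>c. z \<noteq> c *\<^sub>R x"
  shows "min \<mu> \<nu> \<le> second_eigenvalue A"
proof -
  let ?mult = "\<lambda>m. \<Sum>v\<in>{v. is_eigenvalue A v \<and> m \<le> v}. order v (char_poly A)"
  have eig: "is_eigenvalue A \<mu>" "is_eigenvalue A \<nu>"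
    using assms(1-3) assms(4)[of 0] by (auto simp: is_eigenvalue_iff)
  have fin: "finite {v. is_eigenvalue A v \<and> m \<le> v}" for m
    by (rule finite_subset[OF _ finite_eigenvalues]) auto
  have "?mult (min \<mu> \<nu>) \<ge> 2"
  proof (cases "\<mu> = \<nu>")
    case True
    then have "order \<mu> (char_poly A) \<le> ?mult (min \<mu> \<nu>)"
      using eig fin by (intro member_le_sum) auto
    with True order_char_poly_ge_2[OF assms(1) _ assms(3,4)] assms(2) show ?thesis by simp
  next
    case False
    have "(\<Sum>v\<in>{\<mu>, \<nu>}. order v (char_poly A)) \<le> ?mult (min \<mu> \<nu>)"
      using eig fin by (intro sum_mono2) auto
    with False order_char_poly_pos[OF eig(1)] order_char_poly_pos[OF eig(2)] show ?thesis
      by simp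
  qed
  moreover have "is_eigenvalue A (min \<mu> \<nu>)" using eig by (simp add: min_def)
  ultimately show ?thesis
    unfolding second_eigenvalue_def
    by (intro Max_ge finite_subset[OF _ finite_eigenvalues]) auto
qed

lemma linear_coeff_eq_0_if_quadratic_nonpos:
  fixes a c :: real
  assumes "a \<ge> 0" "\<And>t. 2 * t * a + t\<^sup>2 * c \<le> 0"
  shows "a = 0"
proof (rule ccontr)
  assume "a \<noteq> 0"
  with assms(1) have a: "a > 0" by simp
  define t where "t = a / (\<bar>c\<bar> + 1)"
  have t: "t > 0" using a by (simp add: t_def)
  have "t * \<bar>c\<bar> < a" using a by (simp add: t_def field_simps)
  then have "t\<^sup>2 * \<bar>c\<bar> < t * a" using t by (simp add: power2_eq_square)
  moreover have "- (t\<^sup>2 * \<bar>c\<bar>) \<le> t\<^sup>2 * c"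
    using mult_left_mono[of "- \<bar>c\<bar>" c "t\<^sup>2"] by simp
  ultimately have "2 * t * a + t\<^sup>2 * c > t * a" by linarith
  with assms(2)[of t] mult_pos_pos[OF t a] show False by linarith
qed

lemma symmetric_matrix_inner:
  fixes B :: "real^'n^'n"
  assumes "transpose B = B"
  shows "(B *v x) \<bullet> y = x \<bullet> (B *v y)"
  by (metis assms dot_lmul_matrix vector_transpose_matrix)

lemma inner_add_scaleR_self:
  fixes a b :: "'a::real_inner"
  shows "(a + t *\<^sub>R b) \<bullet> (a + t *\<^sub>R b) = a \<bullet> a + 2 * t * (a \<bullet> b) + t\<^sup>2 * (b \<bullet> b)"
  by (simp add: inner_commute[of b a] power2_eq_square algebra_simps)

lemma quadratic_form_max_on_subspace:
  fixes B :: "real^'n^'n"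
  assumes "subspace W" "x \<in> W" "x \<noteq> 0"
  obtains x0 where "x0 \<in> W" "norm x0 = 1"
    "\<And>y. y \<in> W \<Longrightarrow> y \<bullet> (B *v y) \<le> (x0 \<bullet> (B *v x0)) * (y \<bullet> y)"
proof -
  define f where "f y = y \<bullet> (B *v y)" for y
  define K where "K = W \<inter> sphere 0 1"
  have "compact K"
    unfolding K_def by (simp add: closed_Int_compact closed_subspace assms(1))
  moreover have "(1 / norm x) *\<^sub>R x \<in> K"
    using assms by (simp add: K_def subspace_scale)
  moreover have "continuous_on K f"
    unfolding f_def by (intro continuous_intros)
  ultimately obtain x0 where x0: "x0 \<in> K" "\<And>y. y \<in> K \<Longrightarrow> f y \<le> f x0"
    using continuous_attains_sup[of K f] by blast
  have "f y \<le> f x0 * (y \<bullet> y)" if "y \<in> W" for y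
  proof (cases "y = 0")
    case False
    define u where "u = (1 / norm y) *\<^sub>R y"
    have "u \<in> K" using False that assms(1) by (simp add: K_def u_def subspace_scale)
    then have "f u \<le> f x0" by (rule x0(2))
    moreover have "f y = (norm y)\<^sup>2 * f u" "y \<bullet> y = (norm y)\<^sup>2"
      using False by (simp_all add: f_def u_def matrix_vector_mult_scaleR power2_eq_square dot_square_norm)
    ultimately show ?thesis by (metis mult.commute mult_right_mono zero_le_power2)
  qed (simp add: f_def)
  with x0(1) show ?thesis using that by (auto simp: K_def f_def)
qed

lemma max_of_symmetric_quadratic_form_is_eigenvector:
  fixes B :: "real^'n^'n"
  assumes sym: "transpose B = B" and W: "subspace W" "\<And>x. x \<in> W \<Longrightarrow> B *v x \<in> W"
    and x0: "x0 \<in> W" "norm x0 = 1"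
    and max: "\<And>y. y \<in> W \<Longrightarrow> y \<bullet> (B *v y) \<le> \<mu> * (y \<bullet> y)"
    and \<mu>: "\<mu> = x0 \<bullet> (B *v x0)"
  shows "B *v x0 = \<mu> *\<^sub>R x0"
proof -
  define h where "h = B *v x0 - \<mu> *\<^sub>R x0"
  have h: "h \<in> W" unfolding h_def using W x0(1) by (simp add: subspace_diff subspace_scale)
  have "2 * t * (h \<bullet> h) + t\<^sup>2 * (h \<bullet> (B *v h) - \<mu> * (h \<bullet> h)) \<le> 0" for t
  proof -
    have le: "(x0 + t *\<^sub>R h) \<bullet> (B *v (x0 + t *\<^sub>R h)) \<le> \<mu> * ((x0 + t *\<^sub>R h) \<bullet> (x0 + t *\<^sub>R h))"
      using max W(1) x0(1) h by (simp add: subspace_add subspace_scale)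
    have lhs: "(x0 + t *\<^sub>R h) \<bullet> (B *v (x0 + t *\<^sub>R h))
        = \<mu> + 2 * t * (h \<bullet> h + \<mu> * (x0 \<bullet> h)) + t\<^sup>2 * (h \<bullet> (B *v h))"
      using symmetric_matrix_inner[OF sym, of h x0]
      by (simp add: \<mu> h_def inner_commute power2_eq_square algebra_simps)
    have rhs: "(x0 + t *\<^sub>R h) \<bullet> (x0 + t *\<^sub>R h) = 1 + 2 * t * (x0 \<bullet> h) + t\<^sup>2 * (h \<bullet> h)"
      using x0(2) by (simp only: inner_add_scaleR_self) (simp add: dot_square_norm)
    from le show ?thesis unfolding lhs rhs by (simp add: algebra_simps)
  qed
  then have "h \<bullet> h = 0"
    by (intro linear_coeff_eq_0_if_quadratic_nonpos) simp_all
  then show ?thesis by (simp add: h_def)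
qed

lemma symmetric_matrix_rayleigh_eigenvector:
  fixes B :: "real^'n^'n"
  assumes "transpose B = B" "subspace W" "\<And>x. x \<in> W \<Longrightarrow> B *v x \<in> W" "x \<in> W" "x \<noteq> 0"
  obtains x0 \<mu> where "x0 \<in> W" "x0 \<noteq> 0" "B *v x0 = \<mu> *\<^sub>R x0"
    "\<And>y. y \<in> W \<Longrightarrow> y \<bullet> (B *v y) \<le> \<mu> * (y \<bullet> y)"
proof -
  obtain x0 where x0: "x0 \<in> W" "norm x0 = 1"
    and max: "\<And>y. y \<in> W \<Longrightarrow> y \<bullet> (B *v y) \<le> (x0 \<bullet> (B *v x0)) * (y \<bullet> y)"
    using quadratic_form_max_on_subspace[OF assms(2,4,5), of B] by blast
  moreover have "x0 \<noteq> 0" using x0(2) by auto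
  ultimately show ?thesis
    using that max_of_symmetric_quadratic_form_is_eigenvector[OF assms(1-3) x0 max refl] by blast
qed

lemma inner_orthogonal_sum_self:
  fixes w u v :: "'a::real_inner"
  assumes "w \<bullet> u = 0" "w \<bullet> v = 0" "u \<bullet> v = 0"
  shows "(w + a *\<^sub>R u + b *\<^sub>R v) \<bullet> (w + a *\<^sub>R u + b *\<^sub>R v)
    = w \<bullet> w + a\<^sup>2 * (u \<bullet> u) + b\<^sup>2 * (v \<bullet> v)"
  using assms by (simp add: inner_add_left inner_add_right inner_commute power2_eq_square)

definition indicator_vec :: "'a set \<Rightarrow> real^'a::finite" where
  "indicator_vec U = (\<chi> v. indicator U v)"

lemma inner_indicator_vec: "indicator_vec U \<bullet> x = (\<Sum>v\<in>U. x $ v)"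
  by (simp add: inner_vec_def indicator_vec_def indicator_def if_distrib[of "\<lambda>c. c * _"]
      sum.inter_filter[symmetric] cong: if_cong)

lemma inner_indicator_vec_self: "indicator_vec U \<bullet> indicator_vec U = real (card U)"
  unfolding inner_indicator_vec by (simp add: indicator_vec_def)

lemma inner_one_left: "1 \<bullet> x = (\<Sum>v\<in>UNIV. x $ v)"
  by (simp add: inner_vec_def)

lemma expansion_ratio_lt:
  fixes d lam k N :: real
  assumes "0 < lam" "2 * lam < d" "0 < k" "d\<^sup>2 * k < 3 * lam\<^sup>2 * (k + N)"
  shows "(d - 2 * lam)\<^sup>2 / (4 * lam\<^sup>2) * k < N"
proof -
  define gap where "gap = d * lam - 2 * lam * lam"
  have "gap > 0"
    using assms(1,2) by (simp add: gap_def)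
  moreover have "4 * (d\<^sup>2 - 3 * lam\<^sup>2) - 3 * (d - 2 * lam)\<^sup>2 = d\<^sup>2 + 12 * gap"
    by (simp add: gap_def power2_eq_square algebra_simps)
  ultimately have "3 * (d - 2 * lam)\<^sup>2 \<le> 4 * (d\<^sup>2 - 3 * lam\<^sup>2)"
    using zero_le_power2[of d] by linarith
  then have "3 * (d - 2 * lam)\<^sup>2 * k \<le> 4 * (d\<^sup>2 - 3 * lam\<^sup>2) * k"
    using assms(3) by (simp add: mult_right_mono)
  with assms(4) have "(d - 2 * lam)\<^sup>2 * k < 4 * lam\<^sup>2 * N"
    by (simp add: algebra_simps)
  with assms(1) show ?thesis
    by (simp add: pos_divide_less_eq mult.commute)
qed

locale regular_bipartite_graph =
  fixes E :: "'a::finite \<Rightarrow> 'a \<Rightarrow> bool" and d :: nat and X :: "'a set"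
  assumes sym: "E u v \<Longrightarrow> E v u"
    and degree: "card {u. E v u} = d"
    and sides: "E u v \<Longrightarrow> u \<in> X \<longleftrightarrow> v \<notin> X"
    and degree_pos: "d > 0"
begin

abbreviation A :: "real^'a^'a" where "A \<equiv> adj_matrix E"

definition side_sign :: "real^'a" where
  "side_sign = (\<chi> v. if v \<in> X then 1 else - 1)"

lemma adj_matrix_mult_nth: "(A *v x) $ v = (\<Sum>u | E v u. x $ u)"
  unfolding adj_matrix_def matrix_vector_mult_def
  by (simp add: if_distrib[of "\<lambda>c. c * _"] sum.inter_filter[symmetric] cong: if_cong)

lemma adj_matrix_symmetric: "transpose A = A"
  by (auto simp: transpose_def adj_matrix_def vec_eq_iff dest: sym)

lemma adj_matrix_mult_one: "A *v 1 = real d *\<^sub>R 1"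
  by (simp add: vec_eq_iff adj_matrix_mult_nth degree)

lemma adj_matrix_mult_side_sign_times: "A *v (side_sign * x) = - (side_sign * (A *v x))"
proof -
  have "(A *v (side_sign * x)) $ v = (\<Sum>u | E v u. - side_sign $ v * x $ u)" for v
    unfolding adj_matrix_mult_nth by (rule sum.cong) (auto simp: side_sign_def dest: sides)
  then show ?thesis by (simp add: vec_eq_iff adj_matrix_mult_nth sum_distrib_left sum_negf)
qed

lemma adj_matrix_mult_side_sign: "A *v side_sign = (- real d) *\<^sub>R side_sign"
  using adj_matrix_mult_side_sign_times[of 1] adj_matrix_mult_one
  by (simp add: vec_eq_iff)

lemma abs_side_sign: "\<bar>side_sign $ v\<bar> = 1"
  by (simp add: side_sign_def)

lemma inner_one_one: "1 \<bullet> (1 :: real^'a) = real CARD('a)"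
  by (simp add: inner_vec_def)

lemma inner_side_sign_times: "(side_sign * x) \<bullet> (side_sign * y) = x \<bullet> y"
  unfolding inner_vec_def side_sign_def by (auto intro: sum.cong)

lemma inner_side_sign_side_sign: "side_sign \<bullet> side_sign = real CARD('a)"
  using inner_side_sign_times[of 1 1] by (simp add: inner_one_one)

lemma inner_side_sign_times_one: "(side_sign * x) \<bullet> 1 = x \<bullet> side_sign"
  by (simp add: inner_vec_def mult.commute)

lemma inner_one_side_sign: "1 \<bullet> side_sign = 0"
proof -
  have "(A *v 1) \<bullet> side_sign = 1 \<bullet> (A *v side_sign)"
    by (rule symmetric_matrix_inner[OF adj_matrix_symmetric])
  then show ?thesis
    using degree_pos by (simp add: adj_matrix_mult_one adj_matrix_mult_side_sign)
qed

lemma eigenvalue_le_if_orthogonal_one: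
  assumes "second_eigenvalue A \<le> lam" "lam < real d"
    and "z \<noteq> 0" "z \<bullet> 1 = 0" "A *v z = \<nu> *\<^sub>R z"
  shows "\<nu> \<le> lam"
proof -
  have "z \<noteq> c *\<^sub>R 1" for c
  proof
    assume "z = c *\<^sub>R 1"
    with assms(4) have "c = 0" by (simp add: inner_one_one)
    with \<open>z = c *\<^sub>R 1\<close> assms(3) show False by simp
  qed
  then have "min (real d) \<nu> \<le> second_eigenvalue A"
    using second_eigenvalue_ge_min[OF adj_matrix_mult_one assms(5)] by (simp add: vec_eq_iff)
  with assms(1,2) show ?thesis by linarith
qed

text \<open>The eigenvector is \<open>A x + \<nu> x\<close>, or \<open>side_sign * x\<close> if that vanishes.\<close>
lemma eigenvector_from_square:
  assumes "A *v (A *v x) = (\<nu> * \<nu>) *\<^sub>R x" "x \<noteq> 0" "x \<bullet> 1 = 0" "x \<bullet> side_sign = 0"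
  obtains z where "z \<noteq> 0" "z \<bullet> 1 = 0" "A *v z = \<nu> *\<^sub>R z"
proof (cases "A *v x + \<nu> *\<^sub>R x = 0")
  case False
  have "(A *v x) \<bullet> 1 = 0"
    using assms(3) by (simp add: symmetric_matrix_inner[OF adj_matrix_symmetric] adj_matrix_mult_one)
  moreover have "A *v (A *v x + \<nu> *\<^sub>R x) = \<nu> *\<^sub>R (A *v x + \<nu> *\<^sub>R x)"
    using assms(1) by (simp add: algebra_simps)
  ultimately show ?thesis
    using that[OF False] assms(3) by (simp add: inner_add_left)
next
  case True
  then have "A *v x = (- \<nu>) *\<^sub>R x" by (simp add: add_eq_0_iff)
  then have "A *v (side_sign * x) = \<nu> *\<^sub>R (side_sign * x)"
    by (simp add: adj_matrix_mult_side_sign_times)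
  moreover have "side_sign * x \<noteq> 0"
    using assms(2) inner_side_sign_times[of x x] by auto
  ultimately show ?thesis
    using that assms(4) by (simp add: inner_side_sign_times_one)
qed

lemma adj_matrix_norm_le_orthogonal:
  assumes "second_eigenvalue A \<le> lam" "lam < real d"
    and "x \<bullet> 1 = 0" "x \<bullet> side_sign = 0"
  shows "(A *v x) \<bullet> (A *v x) \<le> lam\<^sup>2 * (x \<bullet> x)"
proof (cases "x = 0")
  case False
  define W where "W = {y. y \<bullet> 1 = 0 \<and> y \<bullet> side_sign = 0}"
  have "subspace W"
    by (auto simp: W_def subspace_def inner_add_left)
  moreover have "A *v (A *v y) \<in> W" if "y \<in> W" for y
    using that by (simp add: W_def symmetric_matrix_inner[OF adj_matrix_symmetric]
        adj_matrix_mult_one adj_matrix_mult_side_sign)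
  moreover have sym: "transpose (A ** A) = A ** A"
    by (simp add: matrix_transpose_mul adj_matrix_symmetric)
  ultimately obtain x0 \<mu> where x0: "x0 \<in> W" "x0 \<noteq> 0" "A *v (A *v x0) = \<mu> *\<^sub>R x0"
    and max: "\<And>y. y \<in> W \<Longrightarrow> y \<bullet> ((A ** A) *v y) \<le> \<mu> * (y \<bullet> y)"
    using symmetric_matrix_rayleigh_eigenvector[of "A ** A" W x] assms(3,4) False
    by (auto simp: W_def matrix_vector_mul_assoc)
  have "\<mu> \<le> lam\<^sup>2"
  proof (rule ccontr)
    assume "\<not> \<mu> \<le> lam\<^sup>2"
    then have "lam\<^sup>2 < \<mu>" "\<mu> \<ge> 0"
      using zero_le_power2[of lam] by linarith+
    then have "lam < sqrt \<mu>" "sqrt \<mu> * sqrt \<mu> = \<mu>"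
      by (simp_all add: real_less_rsqrt)
    with x0 obtain z where "z \<noteq> 0" "z \<bullet> 1 = 0" "A *v z = sqrt \<mu> *\<^sub>R z"
      using eigenvector_from_square[of x0 "sqrt \<mu>"] by (auto simp: W_def)
    with assms(1,2) \<open>lam < sqrt \<mu>\<close> show False
      using eigenvalue_le_if_orthogonal_one by fastforce
  qed
  have "(A *v x) \<bullet> (A *v x) = x \<bullet> ((A ** A) *v x)"
    by (simp add: symmetric_matrix_inner[OF adj_matrix_symmetric] matrix_vector_mul_assoc)
  also have "\<dots> \<le> \<mu> * (x \<bullet> x)"
    using max assms(3,4) by (simp add: W_def)
  also have "\<dots> \<le> lam\<^sup>2 * (x \<bullet> x)"
    using \<open>\<mu> \<le> lam\<^sup>2\<close> by (simp add: mult_right_mono)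
  finally show ?thesis .
qed simp

lemma adj_matrix_norm_le:
  assumes "second_eigenvalue A \<le> lam" "lam < real d"
  shows "(A *v x) \<bullet> (A *v x)
    \<le> (real d)\<^sup>2 * ((x \<bullet> 1)\<^sup>2 + (x \<bullet> side_sign)\<^sup>2) / real CARD('a) + lam\<^sup>2 * (x \<bullet> x)"
proof -
  define n where "n = real CARD('a)"
  define \<alpha> where "\<alpha> = (x \<bullet> 1) / n"
  define \<beta> where "\<beta> = (x \<bullet> side_sign) / n"
  define w where "w = x - \<alpha> *\<^sub>R 1 - \<beta> *\<^sub>R side_sign"
  have "n > 0" by (simp add: n_def)
  have orth: "1 \<bullet> side_sign = 0" "side_sign \<bullet> 1 = 0"
    by (simp_all add: inner_one_side_sign inner_commute[of side_sign])
  have w: "w \<bullet> 1 = 0" "w \<bullet> side_sign = 0"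
    using \<open>n > 0\<close> orth by (simp_all add: w_def \<alpha>_def \<beta>_def n_def inner_diff_left
        inner_one_one inner_side_sign_side_sign)
  have Aw: "(A *v w) \<bullet> 1 = 0" "(A *v w) \<bullet> side_sign = 0"
    using w by (simp_all add: symmetric_matrix_inner[OF adj_matrix_symmetric]
        adj_matrix_mult_one adj_matrix_mult_side_sign)
  have x: "x = w + \<alpha> *\<^sub>R 1 + \<beta> *\<^sub>R side_sign"
    by (simp add: w_def)
  have ww: "w \<bullet> w \<le> x \<bullet> x"
    using w orth inner_orthogonal_sum_self[of w 1 side_sign \<alpha> \<beta>] by (simp flip: x)
  have Ax: "A *v x = A *v w + (\<alpha> * real d) *\<^sub>R 1 + (- \<beta> * real d) *\<^sub>R side_sign"
    by (subst x) (simp add: algebra_simps adj_matrix_mult_one adj_matrix_mult_side_sign)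
  have "(A *v x) \<bullet> (A *v x) = (A *v w) \<bullet> (A *v w)
      + (\<alpha> * real d)\<^sup>2 * (1 \<bullet> (1 :: real^'a)) + (- \<beta> * real d)\<^sup>2 * (side_sign \<bullet> side_sign)"
    unfolding Ax by (rule inner_orthogonal_sum_self[OF Aw orth(1)])
  also have "\<dots> = (A *v w) \<bullet> (A *v w) + (real d)\<^sup>2 * (\<alpha>\<^sup>2 * n + \<beta>\<^sup>2 * n)"
    by (simp add: inner_one_one inner_side_sign_side_sign n_def algebra_simps)
  also have "\<dots> \<le> lam\<^sup>2 * (x \<bullet> x) + (real d)\<^sup>2 * (\<alpha>\<^sup>2 * n + \<beta>\<^sup>2 * n)"
    using adj_matrix_norm_le_orthogonal[OF assms w] mult_left_mono[OF ww, of "lam\<^sup>2"] by simp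
  also have "\<alpha>\<^sup>2 * n + \<beta>\<^sup>2 * n = ((x \<bullet> 1)\<^sup>2 + (x \<bullet> side_sign)\<^sup>2) / n"
    using \<open>n > 0\<close> by (simp add: \<alpha>_def \<beta>_def power2_eq_square field_simps)
  finally show ?thesis
    by (simp add: n_def algebra_simps)
qed

lemma degree_card_le_card_closed_nbhd:
  "(real d * real (card U))\<^sup>2
    \<le> real (card (U \<union> nbhd E U)) * ((A *v indicator_vec U) \<bullet> (A *v indicator_vec U))"
proof -
  let ?y = "A *v indicator_vec U" and ?T = "U \<union> nbhd E U"
  have "?y $ v = 0" if "v \<notin> ?T" for v
    using that by (auto simp: adj_matrix_mult_nth nbhd_def indicator_vec_def
        intro!: sum.neutral dest: sym)
  then have "indicator_vec ?T \<bullet> ?y = 1 \<bullet> ?y"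
    unfolding inner_indicator_vec inner_one_left by (intro sum.mono_neutral_left) auto
  also have "\<dots> = real d * real (card U)"
    by (simp add: symmetric_matrix_inner[OF adj_matrix_symmetric, symmetric]
        adj_matrix_mult_one inner_commute[of 1] inner_indicator_vec)
  finally show ?thesis
    using Cauchy_Schwarz_ineq[of "indicator_vec ?T" ?y] by (simp add: inner_indicator_vec_self)
qed

lemma adj_matrix_norm_indicator_lt:
  assumes "second_eigenvalue A \<le> lam" "lam < real d" "U \<noteq> {}"
    and small: "real (card U) < lam\<^sup>2 * real CARD('a) / (real d)\<^sup>2"
  shows "(A *v indicator_vec U) \<bullet> (A *v indicator_vec U) < 3 * lam\<^sup>2 * real (card U)"
proof -
  define k where "k = real (card U)"
  define n where "n = real CARD('a)"
  have "k > 0" "n > 0"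
    using \<open>U \<noteq> {}\<close> by (simp_all add: k_def n_def card_gt_0_iff)
  have "\<bar>indicator_vec U \<bullet> side_sign\<bar> \<le> (\<Sum>v\<in>U. \<bar>side_sign $ v\<bar>)"
    unfolding inner_indicator_vec by (rule sum_abs)
  also have "\<dots> = k"
    using abs_side_sign by (simp add: k_def)
  finally have "(indicator_vec U \<bullet> side_sign)\<^sup>2 \<le> k\<^sup>2"
    by (metis abs_ge_zero power2_abs power_mono)
  then have "(real d)\<^sup>2 * (k\<^sup>2 + (indicator_vec U \<bullet> side_sign)\<^sup>2) / n \<le> (real d)\<^sup>2 * (2 * k\<^sup>2) / n"
    using \<open>n > 0\<close> by (intro divide_right_mono mult_left_mono) simp_all
  moreover have "indicator_vec U \<bullet> 1 = k"
    by (simp add: inner_indicator_vec k_def)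
  ultimately have "(A *v indicator_vec U) \<bullet> (A *v indicator_vec U) \<le> (real d)\<^sup>2 * (2 * k\<^sup>2) / n + lam\<^sup>2 * k"
    using adj_matrix_norm_le[OF assms(1,2), of "indicator_vec U"]
    by (simp add: inner_indicator_vec_self k_def n_def)
  also have "(real d)\<^sup>2 * (2 * k\<^sup>2) / n = 2 * k * ((real d)\<^sup>2 * k / n)"
    by (simp add: power2_eq_square)
  also have "(real d)\<^sup>2 * k / n < lam\<^sup>2"
    using small degree_pos \<open>n > 0\<close> by (simp add: k_def n_def field_simps)
  finally show ?thesis
    using \<open>k > 0\<close> by (simp add: k_def algebra_simps)
qed

lemma card_nbhd_gt:
  assumes "second_eigenvalue A \<le> lam" "0 < lam" "lam < real d / 2" "U \<noteq> {}"
    and "real (card U) < lam\<^sup>2 * real CARD('a) / (real d)\<^sup>2"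
  shows "real (card (nbhd E U)) > (real d - 2 * lam)\<^sup>2 / (4 * lam\<^sup>2) * real (card U)"
proof -
  define k where "k = real (card U)"
  define N where "N = real (card (nbhd E U))"
  have "k > 0" using \<open>U \<noteq> {}\<close> by (simp add: k_def card_gt_0_iff)
  have "real (card (U \<union> nbhd E U)) = k + N"
    by (simp add: k_def N_def card_Un_disjoint nbhd_def disjoint_iff)
  moreover have "(k + N) * ((A *v indicator_vec U) \<bullet> (A *v indicator_vec U)) < (k + N) * (3 * lam\<^sup>2 * k)"
    using adj_matrix_norm_indicator_lt[OF assms(1) _ assms(4,5)] assms(2,3) \<open>k > 0\<close>
    by (intro mult_strict_left_mono) (simp_all add: k_def N_def)
  ultimately have "(real d * k)\<^sup>2 < (k + N) * (3 * lam\<^sup>2 * k)"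
    using degree_card_le_card_closed_nbhd[of U] by (simp add: k_def)
  then have "k * ((real d)\<^sup>2 * k) < k * (3 * lam\<^sup>2 * (k + N))"
    by (simp add: power2_eq_square algebra_simps)
  then have "(real d)\<^sup>2 * k < 3 * lam\<^sup>2 * (k + N)"
    using mult_less_cancel_left_pos[OF \<open>k > 0\<close>] by blast
  with assms(2,3) \<open>k > 0\<close> show ?thesis
    unfolding k_def N_def by (intro expansion_ratio_lt) simp_all
qed

end

theorem corollary10:
  fixes E :: "'a::finite \<Rightarrow> 'a \<Rightarrow> bool" and d :: nat and lam :: real and U :: "'a set"
  assumes "simple_graph E" and "regular E d" and "bipartite E"
    and "second_eigenvalue (adj_matrix E) \<le> lam"
    and "0 < lam" and "lam < real d / 2"
    and "U \<noteq> {}"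
    and "real (card U) < lam ^ 2 * real CARD('a) / (real d) ^ 2"
  shows "real (card (nbhd E U)) > (real d - 2 * lam) ^ 2 / (4 * lam ^ 2) * real (card U)"
proof -
  obtain X where "\<forall>u v. E u v \<longrightarrow> (u \<in> X \<longleftrightarrow> v \<notin> X)"
    using \<open>bipartite E\<close> unfolding bipartite_def by blast
  moreover have "d > 0"
    using \<open>0 < lam\<close> \<open>lam < real d / 2\<close> by simp
  ultimately interpret regular_bipartite_graph E d X
    using \<open>simple_graph E\<close> \<open>regular E d\<close>
    by unfold_locales (auto simp: simple_graph_def regular_def)
  show ?thesis
    using card_nbhd_gt assms(4-8) by blast
qed

end
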